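(* Let $p$ be an odd prime, $k\ge1$, $s\ge2$, $0\le l<p^k$ with $l=\alpha p+\beta$ ($0\le\alpha<p^{k-1}$, $0\le\beta\le p-1$), and let $0\le t'\le p-1$, $0\le\beta'\le p-1$. Define $$m_{2s-1}=p^k(p-1)-\big((p-1)(\alpha+p^{k-1}t')+\beta\big),\quad m_{2s}=p^kt',\quad m_{2s+1}=p^k(p-1)-\big((p-1)l+\beta'\big),$$ and $n_j=p^k(p-1)-m_j$ for $j\in\{2s-1,2s,2s+1\}$. Say "there is a descent at $2s-1$" if $m_{2s-1}>m_{2s}$ and $n_{2s-1}<n_{2s}$, and "there is a descent at $2s$" if $m_{2s}>m_{2s+1}$ and $n_{2s}<n_{2s+1}$. Then, with $j^k_t=t\sum_{\iota=0}^{k-1}p^\iota$: (1) if $l<\frac{p^k-1}{2}$, there is a descent at $2s-1$ if and only if $0\le t'\le\frac{p-1}{2}$ (for every $\beta'$); (2) if $l\ge\frac{p^k-1}{2}$, there is a descent at $2s-1$ if and only if $0\le t'<\frac{p-1}{2}$ (for every $\beta'$); (3) if $1\le t\le p-1$ and $j^k_{t-1}<l<j^k_t$, there is a descent at $2s$ if and only if $p-t\le t'\le p-1$ (for every $\beta'$); (4) if $0\le t\le p-1$ and $l=j^k_t$, then there is a descent at $2s$ if and only if $p-t\le t'\le p-1$ when $\beta'\le t$, and if and only if $p-t-1\le t'\le p-1$ when $\beta'>t$.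
   Context: Interpretation (not needed for the arithmetic claim): in the $p$-Bratteli diagram whose vertices are hook partitions, $m_{2s-1},m_{2s},m_{2s+1}$ are the numbers of horizontal nodes of the last three blocks (each of total size $p^k(p-1)$, $n_j$ being the number of vertical nodes) added along a path which passes, in column $k$, through a vertex indexed $l+p^kt'$ on floor $2(k+s)-1$, then the vertex indexed $l$ on floor $2(k+s)$, and ends at the vertex indexed $pl+\beta'$ on floor $2(k+s)+1$; a descent at position $j$ means block $j$ exceeds block $j+1$ in the sense $m_j>m_{j+1}$, $n_j<n_{j+1}$. *)

theory Defs
  imports Complex_Main "HOL-Computational_Algebra.Primes"
begin

text \<open>Block size p^k (p-1); horizontal node counts of the last three blocks
  (indices 2s-1, 2s, 2s+1), computed in int.\<close>

definition blk :: "nat \<Rightarrow> nat \<Rightarrow> int" where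
  "blk p k = int (p ^ k * (p - 1))"

definition m_prev :: "nat \<Rightarrow> nat \<Rightarrow> nat \<Rightarrow> nat \<Rightarrow> nat \<Rightarrow> int" where
  "m_prev p k \<alpha> \<beta> t' = blk p k - (int (p - 1) * int (\<alpha> + p ^ (k - 1) * t') + int \<beta>)"

definition m_mid :: "nat \<Rightarrow> nat \<Rightarrow> nat \<Rightarrow> int" where
  "m_mid p k t' = int (p ^ k * t')"

definition m_next :: "nat \<Rightarrow> nat \<Rightarrow> nat \<Rightarrow> nat \<Rightarrow> int" where
  "m_next p k l \<beta>' = blk p k - (int (p - 1) * int l + int \<beta>')"

definition n_of :: "nat \<Rightarrow> nat \<Rightarrow> int \<Rightarrow> int" where
  "n_of p k m = blk p k - m"

definition descent_odd :: "nat \<Rightarrow> nat \<Rightarrow> nat \<Rightarrow> nat \<Rightarrow> nat \<Rightarrow> bool" where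
  "descent_odd p k \<alpha> \<beta> t' \<longleftrightarrow>
     m_prev p k \<alpha> \<beta> t' > m_mid p k t' \<and>
     n_of p k (m_prev p k \<alpha> \<beta> t') < n_of p k (m_mid p k t')"

definition descent_even :: "nat \<Rightarrow> nat \<Rightarrow> nat \<Rightarrow> nat \<Rightarrow> nat \<Rightarrow> bool" where
  "descent_even p k l t' \<beta>' \<longleftrightarrow>
     m_mid p k t' > m_next p k l \<beta>' \<and>
     n_of p k (m_mid p k t') < n_of p k (m_next p k l \<beta>')"

definition jkt :: "nat \<Rightarrow> nat \<Rightarrow> nat \<Rightarrow> nat" where
  "jkt p k t = t * (\<Sum>i<k. p ^ i)"

end

theory Submission
  imports Defs
begin

(* Both descent conditions reduce to the m-inequality alone, and each becomes the positivity of
   an integer m u + v with |v| < m, whose sign is that of u unless u = 0.  At 2s-1 one has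
   m = p^(k-1) (2p-1) and u = (p-1)/2 - t', and for t' = (p-1)/2 the remaining condition on the
   digits of l = \<alpha> p + \<beta> is again of this form.  At 2s one has m = p^k and u = t' + t - (p-1);
   the remainder is small because (p-1) j^k_t = t (p^k - 1). *)

lemma pos_mult_add_iff:
  fixes m u v :: int
  assumes "\<bar>v\<bar> < m"
  shows "0 < m * u + v \<longleftrightarrow> 0 < u \<or> (u = 0 \<and> 0 < v)"
proof (cases u "0::int" rule: linorder_cases)
  case less
  then have "m * u \<le> m * (- 1)" using assms by (intro mult_left_mono) auto
  then show ?thesis using less assms by linarith
next
  case greater
  then have "m * 1 \<le> m * u" using assms by (intro mult_left_mono) auto
  then show ?thesis using greater assms by linarith
qed simp

lemma n_of_less_iff: "n_of p k m < n_of p k m' \<longleftrightarrow> m' < m"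
  by (simp add: n_of_def)

lemma descent_odd_iff:
  assumes "p = 2 * h + 1" and "k \<ge> 1" and "\<alpha> < p ^ (k - 1)" and "\<beta> \<le> 2 * h"
  shows "descent_odd p k \<alpha> \<beta> t' \<longleftrightarrow> t' < h \<or> (t' = h \<and> 2 * h * \<alpha> + \<beta> < h * p ^ (k - 1))"
proof -
  define P where "P = int (p ^ (k - 1))"
  have "p ^ k = p * p ^ (k - 1)"
    using \<open>k \<ge> 1\<close> by (simp add: power_eq_if)
  then have "descent_odd p k \<alpha> \<beta> t' \<longleftrightarrow>
      0 < P * (4 * int h + 1) * (int h - int t') + (int h * P - (2 * int h * int \<alpha> + int \<beta>))"
    using \<open>p = 2 * h + 1\<close>
    by (simp add: descent_odd_def n_of_less_iff m_prev_def m_mid_def blk_def P_def algebra_simps)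
  also have "\<dots> \<longleftrightarrow> int h - int t' > 0 \<or>
      (int h - int t' = 0 \<and> 0 < int h * P - (2 * int h * int \<alpha> + int \<beta>))"
  proof (rule pos_mult_add_iff)
    have "int \<alpha> < P"
      unfolding P_def using \<open>\<alpha> < p ^ (k - 1)\<close> by (simp only: of_nat_less_iff)
    then have "2 * int h * (int \<alpha> + 1) \<le> 2 * int h * P" by (intro mult_left_mono) auto
    then have "2 * int h * int \<alpha> + int \<beta> \<le> 2 * (int h * P)"
      using \<open>\<beta> \<le> 2 * h\<close> by (simp add: algebra_simps)
    moreover have "0 < P * (3 * int h + 1)"
      using \<open>int \<alpha> < P\<close> by simp
    then have "int h * P < P * (4 * int h + 1)"
      by (simp add: algebra_simps)
    moreover have "0 \<le> 2 * int h * int \<alpha> + int \<beta>" by simp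
    ultimately show "\<bar>int h * P - (2 * int h * int \<alpha> + int \<beta>)\<bar> < P * (4 * int h + 1)"
      unfolding abs_less_iff by linarith
  qed
  also have "\<dots> \<longleftrightarrow> t' < h \<or> (t' = h \<and> 2 * h * \<alpha> + \<beta> < h * p ^ (k - 1))"
  proof -
    have "2 * h * \<alpha> + \<beta> < h * p ^ (k - 1) \<longleftrightarrow> int (2 * h * \<alpha> + \<beta>) < int (h * p ^ (k - 1))"
      by (rule of_nat_less_iff[symmetric])
    then show ?thesis by (auto simp: P_def)
  qed
  finally show ?thesis .
qed

lemma less_half_block_iff:
  fixes l \<alpha> \<beta> h P c :: nat
  assumes "l = \<alpha> * (2 * h + 1) + \<beta>" and "\<beta> \<le> 2 * h" and "h \<ge> 1" and "P = 2 * c + 1"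
  shows "2 * h * \<alpha> + \<beta> < h * P \<longleftrightarrow> 2 * l + 1 < (2 * h + 1) * P"
proof -
  define u v where "u = int c - int \<alpha>" and "v = int h - int \<beta>"
  have small: "\<bar>v\<bar> < 2 * h" "\<bar>v\<bar> < 2 * h + 1"
    using assms(2,3) by (auto simp: v_def)
  have "2 * h * \<alpha> + \<beta> < h * P \<longleftrightarrow> 0 < 2 * h * u + v"
    using assms by (simp add: u_def v_def algebra_simps flip: of_nat_less_iff[where 'a = int])
  also have "\<dots> \<longleftrightarrow> 0 < (2 * h + 1) * u + v"
    using pos_mult_add_iff[OF small(1)] pos_mult_add_iff[OF small(2)] by simp
  also have "\<dots> \<longleftrightarrow> 2 * l + 1 < (2 * h + 1) * P"
    using assms by (simp add: u_def v_def algebra_simps flip: of_nat_less_iff[where 'a = int]) linarith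
  finally show ?thesis .
qed

lemma descent_odd_iff_half_block:
  assumes "p = 2 * h + 1" and "h \<ge> 1" and "k \<ge> 1" and "\<alpha> < p ^ (k - 1)" and "\<beta> \<le> 2 * h"
  shows "descent_odd p k \<alpha> \<beta> t' \<longleftrightarrow> t' < h \<or> (t' = h \<and> 2 * (\<alpha> * p + \<beta>) + 1 < p ^ k)"
proof -
  have "odd (p ^ (k - 1))"
    using \<open>p = 2 * h + 1\<close> by simp
  then obtain c where "p ^ (k - 1) = 2 * c + 1"
    by (blast elim: oddE)
  moreover have "p ^ k = p * p ^ (k - 1)"
    using \<open>k \<ge> 1\<close> by (simp add: power_eq_if)
  ultimately show ?thesis
    using descent_odd_iff[OF assms(1,3-5)] less_half_block_iff[OF refl assms(5,2)] assms(1)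
    by simp
qed

lemma pred_mult_jkt: "(int p - 1) * int (jkt p k t) = int t * (int (p ^ k) - 1)"
proof -
  have "(int p - 1) * int (jkt p k t) = int t * ((int p - 1) * (\<Sum>i<k. int p ^ i))"
    by (simp add: jkt_def of_nat_sum ac_simps)
  also have "\<dots> = int t * (int (p ^ k) - 1)"
    using power_diff_1_eq[of "int p" k] by simp
  finally show ?thesis .
qed

lemma descent_even_iff:
  assumes "p \<ge> 1"
  shows "descent_even p k l t' \<beta>' \<longleftrightarrow>
    0 < int (p ^ k) * (int t' + int t - int p + 1)
        + (int \<beta>' - int t + (int p - 1) * (int l - int (jkt p k t)))"
  using assms pred_mult_jkt[of p k t]
  by (simp add: descent_even_def n_of_less_iff m_mid_def m_next_def blk_def of_nat_diff algebra_simps)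

lemma descent_even_between_iff:
  assumes "1 \<le> t" and "t < p" and "jkt p k (t - 1) < l" and "l < jkt p k t" and "\<beta>' < p"
  shows "descent_even p k l t' \<beta>' \<longleftrightarrow> p \<le> t' + t"
proof -
  define v where "v = int \<beta>' - int t + (int p - 1) * (int l - int (jkt p k t))"
  have "jkt p k t = jkt p k (t - 1) + jkt p k 1"
    using \<open>1 \<le> t\<close> by (cases t) (simp_all add: jkt_def)
  then have gap: "int (jkt p k t) - int l \<le> int (jkt p k 1) - 1"
    using \<open>jkt p k (t - 1) < l\<close> by simp
  have "(int p - 1) * (int l - int (jkt p k t)) \<le> (int p - 1) * (- 1)"
    using assms by (intro mult_left_mono) auto
  then have "v < 0"
    using assms by (simp add: v_def)
  have "(int p - 1) * (int (jkt p k t) - int l) \<le> (int p - 1) * (int (jkt p k 1) - 1)"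
    using gap assms by (intro mult_left_mono) auto
  then have "- v < int (p ^ k)"
    using pred_mult_jkt[of p k 1] assms by (simp add: v_def algebra_simps)
  have "descent_even p k l t' \<beta>' \<longleftrightarrow> 0 < int (p ^ k) * (int t' + int t - int p + 1) + v"
    using descent_even_iff[of p k l t' \<beta>' t] assms by (simp add: v_def)
  also have "\<dots> \<longleftrightarrow> 0 < int t' + int t - int p + 1 \<or> (int t' + int t - int p + 1 = 0 \<and> 0 < v)"
    using \<open>v < 0\<close> \<open>- v < int (p ^ k)\<close> by (intro pos_mult_add_iff) simp
  also have "\<dots> \<longleftrightarrow> p \<le> t' + t"
    using \<open>v < 0\<close> by auto
  finally show ?thesis .
qed

lemma descent_even_at_iff:
  assumes "t < p" and "l = jkt p k t" and "\<beta>' < p" and "k \<ge> 1"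
  shows "descent_even p k l t' \<beta>' \<longleftrightarrow> p \<le> t' + t \<or> (t' + t + 1 = p \<and> t < \<beta>')"
proof -
  have "p \<le> p ^ k"
    using assms by (simp add: self_le_power)
  then have small: "\<bar>int \<beta>' - int t\<bar> < int (p ^ k)"
    using assms by linarith
  have "descent_even p k l t' \<beta>' \<longleftrightarrow> 0 < int (p ^ k) * (int t' + int t - int p + 1) + (int \<beta>' - int t)"
    using descent_even_iff[of p k l t' \<beta>' t] assms by simp
  also have "\<dots> \<longleftrightarrow> 0 < int t' + int t - int p + 1 \<or> (int t' + int t - int p + 1 = 0 \<and> 0 < int \<beta>' - int t)"
    using small by (rule pos_mult_add_iff)
  also have "\<dots> \<longleftrightarrow> p \<le> t' + t \<or> (t' + t + 1 = p \<and> t < \<beta>')"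
    by auto
  finally show ?thesis .
qed

theorem mainTheorem3:
  fixes p k s l \<alpha> \<beta> t' \<beta>' :: nat
  assumes "prime p" and "odd p" and "k \<ge> 1" and "s \<ge> 2"
    and "l < p ^ k" and "l = \<alpha> * p + \<beta>" and "\<alpha> < p ^ (k - 1)" and "\<beta> \<le> p - 1"
    and "t' \<le> p - 1" and "\<beta>' \<le> p - 1"
  shows "(real l < (real (p ^ k) - 1) / 2 \<longrightarrow>
            (descent_odd p k \<alpha> \<beta> t' \<longleftrightarrow> real t' \<le> (real p - 1) / 2))
       \<and> (real l \<ge> (real (p ^ k) - 1) / 2 \<longrightarrow>
            (descent_odd p k \<alpha> \<beta> t' \<longleftrightarrow> real t' < (real p - 1) / 2))
       \<and> (\<forall>t. 1 \<le> t \<and> t \<le> p - 1 \<and> jkt p k (t - 1) < l \<and> l < jkt p k t \<longrightarrow>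
            (descent_even p k l t' \<beta>' \<longleftrightarrow> p - t \<le> t' \<and> t' \<le> p - 1))
       \<and> (\<forall>t. t \<le> p - 1 \<and> l = jkt p k t \<longrightarrow>
            ((\<beta>' \<le> t \<longrightarrow> (descent_even p k l t' \<beta>' \<longleftrightarrow> p - t \<le> t' \<and> t' \<le> p - 1)) \<and>
             (\<beta>' > t \<longrightarrow> (descent_even p k l t' \<beta>' \<longleftrightarrow> int p - int t - 1 \<le> int t' \<and> t' \<le> p - 1))))"
proof -
  obtain h where h: "p = 2 * h + 1"
    using \<open>odd p\<close> by (blast elim: oddE)
  have "p \<ge> 2"
    using \<open>prime p\<close> by (rule prime_ge_2_nat)
  then have "h \<ge> 1" "\<beta> \<le> 2 * h" "\<beta>' < p"
    using h \<open>\<beta> \<le> p - 1\<close> \<open>\<beta>' \<le> p - 1\<close> by auto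
  have odd_case: "descent_odd p k \<alpha> \<beta> t' \<longleftrightarrow> t' < h \<or> (t' = h \<and> 2 * l + 1 < p ^ k)"
    using descent_odd_iff_half_block[OF h \<open>h \<ge> 1\<close> \<open>k \<ge> 1\<close> \<open>\<alpha> < p ^ (k - 1)\<close> \<open>\<beta> \<le> 2 * h\<close>]
      \<open>l = \<alpha> * p + \<beta>\<close> by simp
  have half: "real l < (real (p ^ k) - 1) / 2 \<longleftrightarrow> 2 * l + 1 < p ^ k"
    by (simp add: field_simps flip: of_nat_less_iff[where 'a = real])
  have "real t' \<le> (real p - 1) / 2 \<longleftrightarrow> t' \<le> h" "real t' < (real p - 1) / 2 \<longleftrightarrow> t' < h"
    using h by simp_all
  then have "real l < (real (p ^ k) - 1) / 2 \<longrightarrow>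
               (descent_odd p k \<alpha> \<beta> t' \<longleftrightarrow> real t' \<le> (real p - 1) / 2)"
        "real l \<ge> (real (p ^ k) - 1) / 2 \<longrightarrow>
               (descent_odd p k \<alpha> \<beta> t' \<longleftrightarrow> real t' < (real p - 1) / 2)"
    using odd_case half by auto
  moreover have "descent_even p k l t' \<beta>' \<longleftrightarrow> p - t \<le> t' \<and> t' \<le> p - 1"
    if "1 \<le> t \<and> t \<le> p - 1 \<and> jkt p k (t - 1) < l \<and> l < jkt p k t" for t
  proof -
    have "t < p"
      using that \<open>p \<ge> 2\<close> by linarith
    then show ?thesis
      using descent_even_between_iff[of t p k l \<beta>' t'] that \<open>t' \<le> p - 1\<close> \<open>\<beta>' < p\<close> by auto
  qed
  moreover have "(\<beta>' \<le> t \<longrightarrow> (descent_even p k l t' \<beta>' \<longleftrightarrow> p - t \<le> t' \<and> t' \<le> p - 1)) \<and>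
      (\<beta>' > t \<longrightarrow> (descent_even p k l t' \<beta>' \<longleftrightarrow> int p - int t - 1 \<le> int t' \<and> t' \<le> p - 1))"
    if "t \<le> p - 1 \<and> l = jkt p k t" for t
  proof -
    have "t < p"
      using that \<open>p \<ge> 2\<close> by linarith
    then show ?thesis
      using descent_even_at_iff[of t p l k \<beta>' t'] that \<open>t' \<le> p - 1\<close> \<open>\<beta>' < p\<close> \<open>k \<ge> 1\<close>
      by auto
  qed
  ultimately show ?thesis
    by blast
qed

end
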